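(* Let $0<b<1$, an integer $0\le m\le n-1$, and $\beta>n-\frac m2$. Let $G:=\{\mathbf x\in\mathbb R^n:x_{m+1}=\dots=x_n=0\}$, $E:=\big((-1,1)^m\times\mathcal B^{n-m}_1(\mathbf 0)\big)\setminus G$, and define $\Psi:E\rightrightarrows E$ by $\Psi(\mathbf x):=E\cap\mathcal B_{d_G(\mathbf x)}(\mathbf x)\cap\mathcal A_{b\,d_G(\mathbf x)}(G)$. If $\gamma:E\to[0,\infty)$ is measurable and $1\le d_G^\beta\gamma\le K_3$ on $E$ for some $K_3<\infty$, then there is a constant $K_4'$ depending only on $n-m$ such that $$\int_{\Psi^{-1}(\mathbf y)}\frac{\gamma(\mathbf x)}{|\Psi(\mathbf x)|}\,d\mathbf x\le n\,2^{3m/2}K_3K_4'\frac{b^{\beta+\frac m2-n}}{(1-b)^{n-m-1}}\gamma(\mathbf y)\quad\text{for all }\mathbf y\in E.$$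
   Context: $d_G$ is the distance to $G$; $\mathcal B_r(\mathbf x)$ is the open ball of radius $r$ centered at $\mathbf x$ and $\mathcal B^{n-m}_1(\mathbf 0)$ the unit ball in $\mathbb R^{n-m}$; $\mathcal A_r(G):=\{\mathbf x:0<d_G(\mathbf x)<r\}$; $\Psi^{-1}(\mathbf y):=\{\mathbf x\in E:\mathbf y\in\Psi(\mathbf x)\}$. *)

theory Defs
  imports "HOL-Analysis.Analysis"
begin

text \<open>Points of R^n are represented as functions nat => real restricted to the
  index set {..<n} (coordinates x_1..x_n are x 0 .. x (n-1)); this lets the
  dimension n be quantified inside the statement.\<close>

definition Rn :: "nat \<Rightarrow> (nat \<Rightarrow> real) set" where
  "Rn n = PiE {..<n} (\<lambda>_. UNIV)"

definition Leb :: "nat \<Rightarrow> (nat \<Rightarrow> real) measure" where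
  "Leb n = completion (PiM {..<n} (\<lambda>_. lborel))"

definition edist :: "nat \<Rightarrow> (nat \<Rightarrow> real) \<Rightarrow> (nat \<Rightarrow> real) \<Rightarrow> real" where
  "edist n x y = sqrt (\<Sum>i<n. (x i - y i)^2)"

definition distset :: "nat \<Rightarrow> (nat \<Rightarrow> real) set \<Rightarrow> (nat \<Rightarrow> real) \<Rightarrow> real" where
  "distset n S x = Inf {edist n x y | y. y \<in> S}"

definition oball :: "nat \<Rightarrow> (nat \<Rightarrow> real) \<Rightarrow> real \<Rightarrow> (nat \<Rightarrow> real) set" where
  "oball n x r = {y \<in> Rn n. edist n x y < r}"

definition annul :: "nat \<Rightarrow> (nat \<Rightarrow> real) set \<Rightarrow> real \<Rightarrow> (nat \<Rightarrow> real) set" where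
  "annul n S r = {x \<in> Rn n. 0 < distset n S x \<and> distset n S x < r}"

definition Gset :: "nat \<Rightarrow> nat \<Rightarrow> (nat \<Rightarrow> real) set" where
  "Gset n m = {x \<in> Rn n. \<forall>i\<in>{m..<n}. x i = 0}"

definition dG :: "nat \<Rightarrow> nat \<Rightarrow> (nat \<Rightarrow> real) \<Rightarrow> real" where
  "dG n m x = distset n (Gset n m) x"

definition Eset :: "nat \<Rightarrow> nat \<Rightarrow> (nat \<Rightarrow> real) set" where
  "Eset n m = {x \<in> Rn n. (\<forall>i<m. -1 < x i \<and> x i < 1) \<and>
                 sqrt (\<Sum>i\<in>{m..<n}. (x i)^2) < 1} - Gset n m"

definition Psi :: "nat \<Rightarrow> nat \<Rightarrow> real \<Rightarrow> (nat \<Rightarrow> real) \<Rightarrow> (nat \<Rightarrow> real) set" where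
  "Psi n m b x = Eset n m \<inter> oball n x (dG n m x) \<inter> annul n (Gset n m) (b * dG n m x)"

definition Psi_inv :: "nat \<Rightarrow> nat \<Rightarrow> real \<Rightarrow> (nat \<Rightarrow> real) \<Rightarrow> (nat \<Rightarrow> real) set" where
  "Psi_inv n m b y = {x \<in> Eset n m. y \<in> Psi n m b x}"

end

theory Submission
  imports Defs "HOL-Analysis.Ball_Volume"
begin

text \<open>
  For x in E let D = d_G(x) be the norm of the last n - m coordinates of x. The set \<Psi>(x)
  contains the product of an orthant of the m-ball of radius D sqrt(3b)/2 around the first m
  coordinates of x, opening towards the centre of the cube (so that it stays inside (-1,1)^m),
  with a cube of half-width b D / (4 sqrt(n - m)) around 3b/4 times the last coordinates.
  Hence |\<Psi>(x)| \<ge> c D^n.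

  If y \<in> \<Psi>(x) then R = d_G(y)/b < D and |x - y| < D. Grouping the points x of \<Psi>^-1(y)
  according to q^j R \<le> D < q^(j+1) R with q = 6/5, each group lies in the cylinder
  (ball times cube) of radius q^(j+1) R around y, on which the integrand is at most
  K3 (q^j R)^-\<beta> / (c (q^j R)^n). Summing the geometric series in q^-\<beta> gives the bound;
  \<beta> \<ge> 1 and (4q/sqrt 3)^2 \<le> 8 turn it into the stated constant.
\<close>

section \<open>Lebesgue measure on coordinate products\<close>

abbreviation lborel_on :: "'i set \<Rightarrow> ('i \<Rightarrow> real) measure" where
  "lborel_on I \<equiv> PiM I (\<lambda>_. lborel)"

lemma emeasure_lborel_affine_preimage:
  fixes a c :: real
  assumes "a \<noteq> 0" "A \<in> sets borel"
  shows "emeasure lborel A = ennreal \<bar>a\<bar> * emeasure lborel {x. c + a * x \<in> A}"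
proof -
  have "emeasure lborel A = emeasure (density (distr lborel borel (\<lambda>x. c + a * x)) (\<lambda>_. ennreal \<bar>a\<bar>)) A"
    using lborel_real_affine[OF assms(1), of c] by simp
  also have "\<dots> = ennreal \<bar>a\<bar> * emeasure lborel {x. c + a * x \<in> A}"
    using assms by (simp add: emeasure_density_const emeasure_distr vimage_def)
  finally show ?thesis .
qed

lemma emeasure_lborel_on_affine_preimage:
  fixes a c :: "'i \<Rightarrow> real"
  assumes fin: "finite I" and a: "\<And>i. i \<in> I \<Longrightarrow> a i \<noteq> 0" and S: "S \<in> sets (lborel_on I)"
  shows "emeasure (lborel_on I) S = (\<Prod>i\<in>I. ennreal \<bar>a i\<bar>) *
     emeasure (lborel_on I) ((\<lambda>u. \<lambda>i\<in>I. c i + a i * u i) -` S \<inter> space (lborel_on I))"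
proof -
  interpret product_sigma_finite "\<lambda>_. lborel :: real measure" by standard
  define T where "T = (\<lambda>u. \<lambda>i\<in>I. c i + a i * u i)"
  have T: "T \<in> measurable (lborel_on I) (lborel_on I)"
    unfolding T_def by measurable
  define P where "P = scale_measure (\<Prod>i\<in>I. ennreal \<bar>a i\<bar>) (distr (lborel_on I) (lborel_on I) T)"
  have "P = lborel_on I"
  proof (rule PiM_eqI[OF fin])
    fix A :: "'i \<Rightarrow> real set" assume A: "\<And>i. i \<in> I \<Longrightarrow> A i \<in> sets lborel"
    have "T -` Pi\<^sub>E I A \<inter> space (lborel_on I) = Pi\<^sub>E I (\<lambda>i. {x. c i + a i * x \<in> A i})"
      by (auto simp: T_def space_PiM PiE_iff extensional_def)
    then have "emeasure P (Pi\<^sub>E I A) = (\<Prod>i\<in>I. ennreal \<bar>a i\<bar>) * (\<Prod>i\<in>I. emeasure lborel {x. c i + a i * x \<in> A i})"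
      unfolding P_def using A fin by (simp add: emeasure_distr[OF T] emeasure_PiM)
    also have "\<dots> = (\<Prod>i\<in>I. emeasure lborel (A i))"
      unfolding prod.distrib[symmetric]
      using A a by (intro prod.cong refl emeasure_lborel_affine_preimage[symmetric]) auto
    finally show "emeasure P (Pi\<^sub>E I A) = (\<Prod>i\<in>I. emeasure lborel (A i))" .
  qed (simp add: P_def)
  then have "emeasure (lborel_on I) S = emeasure P S" by simp
  with S show ?thesis
    unfolding T_def[symmetric] by (simp add: P_def emeasure_distr[OF T])
qed

lemma emeasure_lborel_on_box:
  assumes "finite I" "\<And>i. i \<in> I \<Longrightarrow> a i \<le> c i"
  shows "emeasure (lborel_on I) (PiE I (\<lambda>i. {a i<..<c i})) = ennreal (\<Prod>i\<in>I. c i - a i)"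
proof -
  interpret product_sigma_finite "\<lambda>_. lborel :: real measure" by standard
  show ?thesis using assms by (simp add: emeasure_PiM prod_ennreal)
qed

definition cball_on :: "'i set \<Rightarrow> ('i \<Rightarrow> real) \<Rightarrow> real \<Rightarrow> ('i \<Rightarrow> real) set" where
  "cball_on I c r = {u \<in> PiE I (\<lambda>_. UNIV). (\<Sum>i\<in>I. (u i - c i)^2) \<le> r^2}"

definition orthant_on :: "'i set \<Rightarrow> ('i \<Rightarrow> real) \<Rightarrow> ('i \<Rightarrow> real) \<Rightarrow> ('i \<Rightarrow> real) set" where
  "orthant_on I c s = {u \<in> PiE I (\<lambda>_. UNIV). \<forall>i\<in>I. 0 \<le> s i * (u i - c i)}"

lemma sets_cball_on [measurable]: "cball_on I c r \<in> sets (lborel_on I)"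
proof -
  have "cball_on I c r = {u \<in> space (lborel_on I). (\<Sum>i\<in>I. (u i - c i)^2) \<le> r^2}"
    by (simp add: cball_on_def space_PiM)
  also have "\<dots> \<in> sets (lborel_on I)" by measurable
  finally show ?thesis .
qed

lemma sets_orthant_on [measurable]:
  assumes "finite I" shows "orthant_on I c s \<in> sets (lborel_on I)"
proof -
  have "orthant_on I c s = space (lborel_on I) \<inter> (\<Inter>i\<in>I. {u \<in> space (lborel_on I). 0 \<le> s i * (u i - c i)})"
    by (auto simp: orthant_on_def space_PiM)
  also have "\<dots> \<in> sets (lborel_on I)" using assms by measurable
  finally show ?thesis .
qed

lemma emeasure_cball_on:
  assumes "finite I" "r > 0"
  shows "emeasure (lborel_on I) (cball_on I c r) = ennreal (unit_ball_vol (card I) * r ^ card I)"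
proof -
  have "(\<lambda>u. \<lambda>i\<in>I. c i + 1 * u i) -` cball_on I c r \<inter> space (lborel_on I)
      = {f. sqrt (\<Sum>i\<in>I. (f i)\<^sup>2) \<le> r} \<inter> space (lborel_on I)"
    using assms(2) by (auto simp: cball_on_def space_PiM PiE_iff extensional_def
        intro: real_le_lsqrt dest: sqrt_le_D)
  then show ?thesis
    using emeasure_lborel_on_affine_preimage[OF assms(1), of "\<lambda>_. 1" "cball_on I c r" c]
      emeasure_cball_aux[OF assms] by simp
qed

lemma emeasure_cball_orthant_on:
  assumes fin: "finite I" and r: "r > 0" and s: "\<And>i. i \<in> I \<Longrightarrow> s i = 1 \<or> s i = -1"
  shows "emeasure (lborel_on I) (cball_on I c r \<inter> orthant_on I c s) =
    ennreal (r ^ card I) * emeasure (lborel_on I) (cball_on I (\<lambda>_. 0) 1 \<inter> orthant_on I (\<lambda>_. 0) (\<lambda>_. 1))"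
proof -
  have "\<bar>r * s i\<bar> = r" if "i \<in> I" for i
    using s[OF that] r by auto
  then have scale: "(\<Prod>i\<in>I. ennreal \<bar>r * s i\<bar>) = ennreal (r ^ card I)"
    using r by (simp add: ennreal_power)
  have "(r * s i * u i)\<^sup>2 = r\<^sup>2 * (u i)\<^sup>2" and "0 \<le> s i * (r * s i * u i) \<longleftrightarrow> 0 \<le> u i"
    if "i \<in> I" for i u
    using s[OF that] r by (auto simp: power_mult_distrib zero_le_mult_iff)
  then have "(\<lambda>u. \<lambda>i\<in>I. c i + r * s i * u i) -` (cball_on I c r \<inter> orthant_on I c s) \<inter> space (lborel_on I)
      = cball_on I (\<lambda>_. 0) 1 \<inter> orthant_on I (\<lambda>_. 0) (\<lambda>_. 1)"
    using r by (auto simp: cball_on_def orthant_on_def space_PiM PiE_iff extensional_def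
        sum_distrib_left[symmetric] cong: sum.cong)
  moreover have "s i \<noteq> 0" if "i \<in> I" for i
    using s[OF that] by auto
  ultimately show ?thesis
    using emeasure_lborel_on_affine_preimage[OF fin, of "\<lambda>i. r * s i" "cball_on I c r \<inter> orthant_on I c s" c]
      r fin scale by (simp add: sets_orthant_on)
qed

lemma measure_cball_orthant_on_ge:
  assumes fin: "finite I" and r: "r > 0" and s: "\<And>i. i \<in> I \<Longrightarrow> s i = 1 \<or> s i = -1"
  shows "unit_ball_vol (card I) * r ^ card I
    \<le> 2 ^ card I * measure (lborel_on I) (cball_on I c r \<inter> orthant_on I c s)"
proof -
  define signs where "signs = PiE I (\<lambda>_. {1::real, -1})"
  define Q where "Q \<sigma> = cball_on I c r \<inter> orthant_on I c \<sigma>" for \<sigma>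
  have signs: "finite signs" "card signs = 2 ^ card I"
    using fin by (simp_all add: signs_def finite_PiE card_PiE numeral_2_eq_2)
  have same: "emeasure (lborel_on I) (Q \<sigma>) = emeasure (lborel_on I) (Q s)" if "\<sigma> \<in> signs" for \<sigma>
    using that s unfolding Q_def signs_def by (simp add: emeasure_cball_orthant_on[OF fin r] PiE_iff)
  have "cball_on I c r \<subseteq> (\<Union>\<sigma>\<in>signs. Q \<sigma>)"
  proof
    fix u assume "u \<in> cball_on I c r"
    moreover have "(\<lambda>i\<in>I. if 0 \<le> u i - c i then 1 else -1) \<in> signs"
      by (simp add: signs_def)
    ultimately show "u \<in> (\<Union>\<sigma>\<in>signs. Q \<sigma>)"
      by (intro UN_I) (auto simp: Q_def orthant_on_def cball_on_def)
  qed
  then have "emeasure (lborel_on I) (cball_on I c r) \<le> emeasure (lborel_on I) (\<Union>\<sigma>\<in>signs. Q \<sigma>)"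
    using fin signs by (intro emeasure_mono sets.finite_UN) (auto simp: Q_def)
  also have "\<dots> \<le> (\<Sum>\<sigma>\<in>signs. emeasure (lborel_on I) (Q \<sigma>))"
    using fin signs by (intro emeasure_subadditive_finite) (auto simp: Q_def)
  also have "\<dots> = 2 ^ card I * emeasure (lborel_on I) (Q s)"
    using same signs by simp
  also have "emeasure (lborel_on I) (Q s) = measure (lborel_on I) (Q s)"
  proof (rule emeasure_eq_measure2, rule fmeasurableI2)
    show "cball_on I c r \<in> fmeasurable (lborel_on I)"
      using fin r by (intro fmeasurableI) (simp_all add: emeasure_cball_on)
  qed (use fin in \<open>auto simp: Q_def\<close>)
  finally have "ennreal (unit_ball_vol (card I) * r ^ card I)
      \<le> ennreal (2 ^ card I * measure (lborel_on I) (Q s))"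
    using emeasure_cball_on[OF fin r] r ennreal_power[of 2 "card I"] by (simp add: ennreal_mult')
  then show ?thesis
    by (simp add: Q_def)
qed

definition block_product :: "'i set \<Rightarrow> 'i set \<Rightarrow> ('i \<Rightarrow> real) set \<Rightarrow> ('i \<Rightarrow> real) set \<Rightarrow> ('i \<Rightarrow> real) set" where
  "block_product I J A B = {z \<in> PiE (I \<union> J) (\<lambda>_. UNIV). restrict z I \<in> A \<and> restrict z J \<in> B}"

lemma sets_block_product [measurable]:
  assumes [measurable]: "A \<in> sets (lborel_on I)" "B \<in> sets (lborel_on J)"
  shows "block_product I J A B \<in> sets (lborel_on (I \<union> J))"
proof -
  have [measurable]: "(\<lambda>z. restrict z I) \<in> measurable (lborel_on (I \<union> J)) (lborel_on I)"
    "(\<lambda>z. restrict z J) \<in> measurable (lborel_on (I \<union> J)) (lborel_on J)"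
    by (auto intro: measurable_restrict_subset)
  have "block_product I J A B = {z \<in> space (lborel_on (I \<union> J)). restrict z I \<in> A \<and> restrict z J \<in> B}"
    by (simp add: block_product_def space_PiM)
  also have "\<dots> \<in> sets (lborel_on (I \<union> J))" by measurable
  finally show ?thesis .
qed

lemma emeasure_block_product:
  assumes IJ: "I \<inter> J = {}" and fin: "finite I" "finite J"
    and A: "A \<in> sets (lborel_on I)" and B: "B \<in> sets (lborel_on J)"
  shows "emeasure (lborel_on (I \<union> J)) (block_product I J A B) = emeasure (lborel_on I) A * emeasure (lborel_on J) B"
proof -
  interpret product_sigma_finite "\<lambda>_. lborel :: real measure" by standard
  interpret J: finite_product_sigma_finite "\<lambda>_. lborel :: real measure" J by standard (fact fin)
  have "merge I J -` block_product I J A B \<inter> space (lborel_on I \<Otimes>\<^sub>M lborel_on J) = A \<times> B"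
    using IJ sets.sets_into_space[OF A] sets.sets_into_space[OF B]
    by (auto simp: block_product_def space_pair_measure space_PiM PiE_restrict)
  then have "emeasure (lborel_on (I \<union> J)) (block_product I J A B) = emeasure (lborel_on I \<Otimes>\<^sub>M lborel_on J) (A \<times> B)"
    using distr_merge[OF IJ fin] A B
    by (metis emeasure_distr measurable_merge sets_block_product)
  also have "\<dots> = emeasure (lborel_on I) A * emeasure (lborel_on J) B"
    using A B by (rule J.emeasure_pair_measure_Times)
  finally show ?thesis .
qed

lemma measure_block_product:
  assumes "I \<inter> J = {}" "finite I" "finite J"
    and A: "A \<in> fmeasurable (lborel_on I)" and B: "B \<in> fmeasurable (lborel_on J)"
  shows "measure (lborel_on (I \<union> J)) (block_product I J A B) = measure (lborel_on I) A * measure (lborel_on J) B"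
proof -
  have "emeasure (lborel_on (I \<union> J)) (block_product I J A B)
      = ennreal (measure (lborel_on I) A * measure (lborel_on J) B)"
    using emeasure_block_product[OF assms(1-3)] A B by (simp add: emeasure_eq_measure2 ennreal_mult)
  then show ?thesis
    by (simp add: measure_def)
qed

lemma borel_measurable_L2_set_coords:
  assumes "A \<subseteq> I"
  shows "(\<lambda>x. L2_set (\<lambda>i. x i - c i) A) \<in> borel_measurable (lborel_on I)"
    and "(\<lambda>x. L2_set x A) \<in> borel_measurable (lborel_on I)"
proof -
  have sum: "(\<lambda>x. \<Sum>i\<in>A. (x i - c i)\<^sup>2) \<in> borel_measurable (lborel_on I)" for c
    using assms by (intro borel_measurable_sum borel_measurable_power borel_measurable_diff) auto
  show "(\<lambda>x. L2_set (\<lambda>i. x i - c i) A) \<in> borel_measurable (lborel_on I)"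
    unfolding L2_set_def using sum by measurable
  show "(\<lambda>x. L2_set x A) \<in> borel_measurable (lborel_on I)"
    unfolding L2_set_def using sum[of "\<lambda>_. 0", simplified] by measurable
qed

lemma L2_set_pow2: "L2_set f A ^ 2 = (\<Sum>i\<in>A. (f i)\<^sup>2)"
  by (simp add: L2_set_def sum_nonneg)

lemma L2_set_diff_commute: "L2_set (\<lambda>i. f i - g i) A = L2_set (\<lambda>i. g i - f i) A"
  by (simp add: L2_set_def power2_commute)

lemma L2_set_diff_ge: "L2_set f A - L2_set g A \<le> L2_set (\<lambda>i. f i - g i) A"
  using L2_set_triangle_ineq[of "\<lambda>i. f i - g i" g A] by simp

lemma abs_le_L2_set: "finite A \<Longrightarrow> i \<in> A \<Longrightarrow> \<bar>f i\<bar> \<le> L2_set f A"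
  using member_le_L2_set[of A i "\<lambda>i. \<bar>f i\<bar>"] by (simp add: L2_set_def)

lemma edist_eq_L2_set: "edist n x y = L2_set (\<lambda>i. x i - y i) {..<n}"
  by (simp add: edist_def L2_set_def)

lemma edist_pow2_split:
  assumes "m \<le> n"
  shows "edist n x z ^ 2 = (\<Sum>i<m. (x i - z i)\<^sup>2) + L2_set (\<lambda>i. x i - z i) {m..<n} ^ 2"
proof -
  have "{..<n} = {..<m} \<union> {m..<n}"
    using assms by (simp add: ivl_disj_un_one)
  then show ?thesis
    by (simp add: edist_eq_L2_set L2_set_pow2 sum.union_disjoint ivl_disj_int_one)
qed

section \<open>The region E and the map Psi\<close>

lemma dG_eq_L2_set:
  assumes mn: "m \<le> n" and x: "x \<in> Rn n"
  shows "dG n m x = L2_set x {m..<n}"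
proof -
  have le: "L2_set x {m..<n} \<le> edist n x y" if "y \<in> Gset n m" for y
  proof -
    have "L2_set x {m..<n} = L2_set (\<lambda>i. x i - y i) {m..<n}"
      using that by (intro L2_set_cong) (auto simp: Gset_def)
    then have "L2_set x {m..<n} ^ 2 \<le> edist n x y ^ 2"
      using edist_pow2_split[OF mn] by (simp add: sum_nonneg)
    then show ?thesis
      by (rule power2_le_imp_le) (simp add: edist_eq_L2_set)
  qed
  define p where "p = (\<lambda>i\<in>{..<n}. if i < m then x i else 0)"
  have "p \<in> Gset n m"
    by (auto simp: p_def Gset_def Rn_def)
  moreover have "edist n x p = L2_set x {m..<n}"
  proof -
    have "edist n x p ^ 2 = L2_set x {m..<n} ^ 2"
      using edist_pow2_split[OF mn, of x p] mn by (simp add: p_def L2_set_pow2)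
    then show ?thesis
      by (simp add: edist_eq_L2_set power2_eq_iff_nonneg)
  qed
  ultimately show ?thesis
    unfolding dG_def distset_def by (intro cInf_eq_minimum) (auto intro: le exI[of _ p])
qed

lemma Eset_iff:
  "x \<in> Eset n m \<longleftrightarrow>
    x \<in> Rn n \<and> (\<forall>i<m. \<bar>x i\<bar> < 1) \<and> 0 < L2_set x {m..<n} \<and> L2_set x {m..<n} < 1"
proof -
  have "x \<in> Gset n m \<longleftrightarrow> x \<in> Rn n \<and> L2_set x {m..<n} = 0"
    by (auto simp: Gset_def L2_set_eq_0_iff)
  moreover have "L2_set x {m..<n} \<noteq> 0 \<longleftrightarrow> 0 < L2_set x {m..<n}"
    using L2_set_nonneg[of x "{m..<n}"] by linarith
  ultimately show ?thesis
    by (auto simp: Eset_def L2_set_def abs_less_iff)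
qed

lemma Psi_eq:
  assumes mn: "m \<le> n" and x: "x \<in> Eset n m"
  shows "Psi n m b x =
    {z \<in> Eset n m. edist n x z < L2_set x {m..<n} \<and> L2_set z {m..<n} < b * L2_set x {m..<n}}"
  using dG_eq_L2_set[OF mn] x
  by (auto simp: Psi_def oball_def annul_def Eset_iff simp flip: dG_def)

lemma Psi_inv_iff:
  assumes "m \<le> n"
  shows "x \<in> Psi_inv n m b y \<longleftrightarrow>
    x \<in> Eset n m \<and> y \<in> Eset n m \<and> edist n x y < dG n m x \<and> dG n m y < b * dG n m x"
  using Psi_eq[OF assms] dG_eq_L2_set[OF assms] by (auto simp: Psi_inv_def Eset_iff)

lemma sets_Eset:
  assumes "m \<le> n" shows "Eset n m \<in> sets (lborel_on {..<n})"
proof -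
  have [measurable]: "(\<lambda>x. x i) \<in> borel_measurable (lborel_on {..<n})" if "i < m" for i
    using that assms by simp
  have [measurable]: "(\<lambda>x. L2_set x {m..<n}) \<in> borel_measurable (lborel_on {..<n})"
    by (rule borel_measurable_L2_set_coords) auto
  have "Eset n m = {x \<in> space (lborel_on {..<n}). (\<forall>i\<in>{..<m}. \<bar>x i\<bar> < 1)
      \<and> 0 < L2_set x {m..<n} \<and> L2_set x {m..<n} < 1}"
    by (auto simp: Eset_iff space_PiM Rn_def)
  also have "\<dots> \<in> sets (lborel_on {..<n})" by measurable
  finally show ?thesis .
qed

lemma Eset_subset_box: "Eset n m \<subseteq> PiE {..<n} (\<lambda>_. {-1<..<1})"
proof
  fix z assume z: "z \<in> Eset n m"
  have "\<bar>z i\<bar> < 1" if "i < n" for i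
  proof (cases "i < m")
    case False
    then have "\<bar>z i\<bar> \<le> L2_set z {m..<n}"
      using that by (intro abs_le_L2_set) auto
    then show ?thesis
      using z by (simp add: Eset_iff)
  qed (use z in \<open>simp add: Eset_iff\<close>)
  then show "z \<in> PiE {..<n} (\<lambda>_. {-1<..<1})"
    using z by (auto simp: Eset_iff Rn_def PiE_iff abs_less_iff)
qed

lemma Psi_fmeasurable:
  assumes mn: "m \<le> n" and x: "x \<in> Eset n m"
  shows "Psi n m b x \<in> fmeasurable (lborel_on {..<n})"
proof (rule fmeasurableI2)
  show "PiE {..<n} (\<lambda>_. {-1<..<1::real}) \<in> fmeasurable (lborel_on {..<n})"
    by (intro fmeasurableI) (simp_all add: emeasure_lborel_on_box)
  show "Psi n m b x \<subseteq> PiE {..<n} (\<lambda>_. {-1<..<1})"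
    using Eset_subset_box by (auto simp: Psi_def)
  have [measurable]: "Eset n m \<in> sets (lborel_on {..<n})"
    "(\<lambda>z. L2_set (\<lambda>i. z i - x i) {..<n}) \<in> borel_measurable (lborel_on {..<n})"
    "(\<lambda>z. L2_set z {m..<n}) \<in> borel_measurable (lborel_on {..<n})"
    using mn by (auto intro: sets_Eset borel_measurable_L2_set_coords)
  have "Psi n m b x = Eset n m \<inter> {z \<in> space (lborel_on {..<n}).
      L2_set (\<lambda>i. z i - x i) {..<n} < L2_set x {m..<n} \<and> L2_set z {m..<n} < b * L2_set x {m..<n}}"
    using Psi_eq[OF mn x]
    by (auto simp: edist_eq_L2_set L2_set_diff_commute[of x] space_PiM Eset_iff Rn_def)
  also have "\<dots> \<in> sets (lborel_on {..<n})" by measurable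
  finally show "Psi n m b x \<in> sets (lborel_on {..<n})" .
qed

section \<open>A lower bound for the volume of Psi(x)\<close>

lemma cball_orthant_inward_in_cube:
  assumes I: "finite I" "i \<in> I" and x: "\<And>i. i \<in> I \<Longrightarrow> \<bar>x i\<bar> < 1" and r: "0 \<le> r" "r < 1"
    and u: "u \<in> cball_on I x r \<inter> orthant_on I x (\<lambda>i. if 0 \<le> x i then -1 else 1)"
  shows "\<bar>u i\<bar> < 1"
proof -
  have "(u i - x i)\<^sup>2 \<le> (\<Sum>i\<in>I. (u i - x i)\<^sup>2)"
    using I by (intro member_le_sum) auto
  also have "\<dots> \<le> r\<^sup>2"
    using u by (simp add: cball_on_def)
  finally have "\<bar>u i - x i\<bar> < 1"
    using r power2_le_imp_le[of "\<bar>u i - x i\<bar>" r] by simp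
  then show ?thesis
    using u I x[OF I(2)] by (auto simp: orthant_on_def split: if_splits)
qed

lemma L2_set_near_scaled_bounds:
  assumes J: "finite J" "J \<noteq> {}" and b: "0 < b" "b < 1"
    and near: "\<And>i. i \<in> J \<Longrightarrow> \<bar>z i - 3/4 * b * x i\<bar> < b * L2_set x J / (4 * sqrt (card J))"
  shows "b / 2 * L2_set x J < L2_set z J" "L2_set z J < b * L2_set x J"
    "L2_set (\<lambda>i. x i - z i) J < (1 - b / 2) * L2_set x J"
proof -
  define w where "w = (\<lambda>i. 3/4 * b * x i)"
  have "L2_set (\<lambda>i. z i - w i) J = L2_set (\<lambda>i. \<bar>z i - w i\<bar>) J"
    by (simp add: L2_set_def)
  also have "\<dots> < L2_set (\<lambda>_. b * L2_set x J / (4 * sqrt (card J))) J"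
    using J near by (intro L2_set_strict_mono) (auto simp: w_def)
  also have "\<dots> = b / 4 * L2_set x J"
    using J b by (simp add: L2_set_constant)
  finally have zw: "L2_set (\<lambda>i. z i - w i) J < b / 4 * L2_set x J" .
  have "L2_set w J = 3/4 * b * L2_set x J"
    using b L2_set_right_distrib[of "3/4 * b" x J] by (simp add: w_def)
  moreover have "L2_set (\<lambda>i. x i - w i) J = (1 - 3/4 * b) * L2_set x J"
    using b L2_set_right_distrib[of "1 - 3/4 * b" x J] by (simp add: w_def algebra_simps)
  moreover have "L2_set z J \<le> L2_set w J + L2_set (\<lambda>i. z i - w i) J"
    using L2_set_triangle_ineq[of w "\<lambda>i. z i - w i" J] by simp
  moreover have "L2_set (\<lambda>i. x i - z i) J \<le> L2_set (\<lambda>i. x i - w i) J + L2_set (\<lambda>i. z i - w i) J"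
    using L2_set_triangle_ineq[of "\<lambda>i. x i - w i" "\<lambda>i. w i - z i" J]
    by (simp add: L2_set_diff_commute[of w z])
  moreover have "L2_set w J - L2_set z J \<le> L2_set (\<lambda>i. z i - w i) J"
    using L2_set_diff_ge[of w J z] by (simp add: L2_set_diff_commute[of w z])
  ultimately show "b / 2 * L2_set x J < L2_set z J" "L2_set z J < b * L2_set x J"
    "L2_set (\<lambda>i. x i - z i) J < (1 - b / 2) * L2_set x J"
    using zw by (simp_all add: algebra_simps)
qed

lemma edist_lt_of_block_bounds:
  assumes mn: "m \<le> n" and b: "0 \<le> b" "b \<le> 1"
    and tangential: "(\<Sum>i<m. (x i - z i)\<^sup>2) \<le> 3/4 * b * D\<^sup>2"
    and normal: "L2_set (\<lambda>i. x i - z i) {m..<n} < (1 - b / 2) * D"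
  shows "edist n x z < D"
proof -
  have "0 < (1 - b / 2) * D"
    using L2_set_nonneg normal by (rule le_less_trans)
  then have D: "0 \<le> D"
    using b by (simp add: zero_less_mult_iff)
  have "L2_set (\<lambda>i. x i - z i) {m..<n} ^ 2 < ((1 - b / 2) * D)\<^sup>2"
    using normal by (intro power_strict_mono) auto
  then have "edist n x z ^ 2 < 3/4 * b * D\<^sup>2 + ((1 - b / 2) * D)\<^sup>2"
    using edist_pow2_split[OF mn, of x z] tangential by simp
  also have "\<dots> = D\<^sup>2 - b * (1 - b) / 4 * D\<^sup>2"
    by (simp add: power2_eq_square field_simps)
  also have "\<dots> \<le> D\<^sup>2"
    using b by simp
  finally show ?thesis
    using D by (simp add: power_less_imp_less_base)
qed

lemma block_product_subset_Psi:
  assumes mn: "m < n" and b: "0 < b" "b < 1" and x: "x \<in> Eset n m"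
  defines "D \<equiv> L2_set x {m..<n}"
  defines "r \<equiv> D * sqrt (3 * b) / 2" and "h \<equiv> b * D / (4 * sqrt (n - m))"
  shows "block_product {..<m} {m..<n}
      (cball_on {..<m} x r \<inter> orthant_on {..<m} x (\<lambda>i. if 0 \<le> x i then -1 else 1))
      (PiE {m..<n} (\<lambda>i. {3/4 * b * x i - h <..< 3/4 * b * x i + h}))
    \<subseteq> Psi n m b x" (is "?P \<subseteq> _")
proof
  fix z assume z: "z \<in> ?P"
  have D: "0 < D" "D < 1"
    using x by (simp_all add: D_def Eset_iff)
  have zR: "z \<in> Rn n"
    using z mn by (simp add: block_product_def Rn_def ivl_disj_un_one)
  have tangential: "restrict z {..<m} \<in> cball_on {..<m} x r \<inter> orthant_on {..<m} x (\<lambda>i. if 0 \<le> x i then -1 else 1)"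
    using z by (simp add: block_product_def)
  have "\<bar>z i - 3/4 * b * x i\<bar> < b * L2_set x {m..<n} / (4 * sqrt (card {m..<n}))"
    if "i \<in> {m..<n}" for i
  proof -
    have "restrict z {m..<n} i \<in> {3/4 * b * x i - h <..< 3/4 * b * x i + h}"
      using z that by (auto simp: block_product_def PiE_iff)
    then show ?thesis
      using that by (simp add: h_def D_def abs_less_iff)
  qed
  moreover have "{m..<n} \<noteq> {}"
    using mn by simp
  ultimately have normal: "b / 2 * D < L2_set z {m..<n}" "L2_set z {m..<n} < b * D"
    "L2_set (\<lambda>i. x i - z i) {m..<n} < (1 - b / 2) * D"
    using L2_set_near_scaled_bounds[OF finite_atLeastLessThan _ b] by (auto simp: D_def)
  have r2: "r\<^sup>2 = 3/4 * b * D\<^sup>2"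
    using b by (simp add: r_def power_mult_distrib power_divide)
  have "r\<^sup>2 < 1 * 1"
    unfolding r2 using b D by (intro mult_strict_mono) (auto simp: power_less_one_iff)
  then have "r < 1"
    using D b by (simp add: r_def power_less_one_iff)
  then have "\<bar>z i\<bar> < 1" if "i < m" for i
    using cball_orthant_inward_in_cube[OF _ _ _ _ _ tangential, of i] that x D b
    by (simp add: Eset_iff r_def)
  moreover have "edist n x z < D"
    using tangential normal(3) mn b r2
    by (intro edist_lt_of_block_bounds) (auto simp: cball_on_def power2_commute)
  moreover have "0 < L2_set z {m..<n}" "L2_set z {m..<n} < 1"
    using normal(1,2) D b mult_strict_mono[of b 1 D 1] by auto
  ultimately show "z \<in> Psi n m b x"
    using Psi_eq[of m n x b] mn x zR normal(2) by (simp add: Eset_iff D_def)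
qed

lemma measure_Psi_ge_block:
  assumes mn: "m < n" and b: "0 < b" "b < 1" and x: "x \<in> Eset n m"
  defines "D \<equiv> L2_set x {m..<n}"
  defines "r \<equiv> D * sqrt (3 * b) / 2" and "h \<equiv> b * D / (4 * sqrt (n - m))"
  shows "unit_ball_vol m * (r ^ m / 2 ^ m) * (2 * h) ^ (n - m) \<le> measure (Leb n) (Psi n m b x)"
proof -
  define A where "A = cball_on {..<m} x r \<inter> orthant_on {..<m} x (\<lambda>i. if 0 \<le> x i then -1 else 1)"
  define B where "B = PiE {m..<n} (\<lambda>i. {3/4 * b * x i - h <..< 3/4 * b * x i + h})"
  have r: "0 < r" and h: "0 < h"
    using x b mn by (simp_all add: r_def h_def D_def Eset_iff)
  have "cball_on {..<m} x r \<in> fmeasurable (lborel_on {..<m})"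
    using r by (intro fmeasurableI) (simp_all add: emeasure_cball_on)
  then have A: "A \<in> fmeasurable (lborel_on {..<m})"
    by (rule fmeasurableI2) (auto simp: A_def sets_orthant_on)
  have "emeasure (lborel_on {m..<n}) B = ennreal ((2 * h) ^ (n - m))"
    using h by (simp add: B_def emeasure_lborel_on_box)
  then have B: "B \<in> fmeasurable (lborel_on {m..<n})" "measure (lborel_on {m..<n}) B = (2 * h) ^ (n - m)"
    using h by (auto simp: fmeasurable_def B_def measure_def intro!: sets_PiM_I_finite)
  have un: "{..<m} \<union> {m..<n} = {..<n}"
    using mn by (simp add: ivl_disj_un_one)
  have "unit_ball_vol m * (r ^ m / 2 ^ m) * (2 * h) ^ (n - m) \<le> measure (lborel_on {..<m}) A * (2 * h) ^ (n - m)"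
    using measure_cball_orthant_on_ge[of "{..<m}" r _ x] r h
    by (intro mult_right_mono) (auto simp: A_def pos_divide_le_eq mult.commute)
  also have "\<dots> = measure (lborel_on {..<n}) (block_product {..<m} {m..<n} A B)"
    using measure_block_product[OF _ _ _ A B(1)] B(2) by (simp add: un ivl_disj_int_one)
  also have "\<dots> \<le> measure (lborel_on {..<n}) (Psi n m b x)"
  proof (rule measure_mono_fmeasurable)
    show "block_product {..<m} {m..<n} A B \<subseteq> Psi n m b x"
      unfolding A_def B_def r_def h_def D_def by (rule block_product_subset_Psi[OF mn b x])
    show "block_product {..<m} {m..<n} A B \<in> sets (lborel_on {..<n})"
      using sets_block_product[of A "{..<m}" B "{m..<n}"] A B by (simp add: un fmeasurable_def)
  qed (rule Psi_fmeasurable[OF less_imp_le[OF mn] x])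
  also have "\<dots> = measure (Leb n) (Psi n m b x)"
    using Psi_fmeasurable[OF less_imp_le[OF mn] x] by (simp add: Leb_def)
  finally show ?thesis .
qed

lemma measure_Psi_ge:
  assumes mn: "m < n" and b: "0 < b" "b < 1" and x: "x \<in> Eset n m"
  shows "unit_ball_vol m * (sqrt (3 * b) / 4) ^ m * (b / (2 * sqrt (n - m))) ^ (n - m) * dG n m x ^ n
    \<le> measure (Leb n) (Psi n m b x)"
proof -
  define D where "D = L2_set x {m..<n}"
  have "D * sqrt (3 * b) / 2 / 2 = sqrt (3 * b) / 4 * D"
    by simp
  then have r: "(D * sqrt (3 * b) / 2) ^ m / 2 ^ m = (sqrt (3 * b) / 4) ^ m * D ^ m"
    by (metis power_divide power_mult_distrib)
  have "2 * (b * D / (4 * sqrt (n - m))) = b / (2 * sqrt (n - m)) * D"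
    by simp
  then have h: "(2 * (b * D / (4 * sqrt (n - m)))) ^ (n - m) = (b / (2 * sqrt (n - m))) ^ (n - m) * D ^ (n - m)"
    by (metis power_mult_distrib)
  have "D ^ n = D ^ m * D ^ (n - m)" "dG n m x = D"
    using mn x dG_eq_L2_set[of m n x] by (simp_all add: D_def Eset_iff flip: power_add)
  then have "unit_ball_vol m * (sqrt (3 * b) / 4) ^ m * (b / (2 * sqrt (n - m))) ^ (n - m) * dG n m x ^ n
      = unit_ball_vol m * ((D * sqrt (3 * b) / 2) ^ m / 2 ^ m) * (2 * (b * D / (4 * sqrt (n - m)))) ^ (n - m)"
    unfolding r h by (simp only: mult_ac)
  then show ?thesis
    using measure_Psi_ge_block[OF mn b x] by (simp only: D_def)
qed

section \<open>Integration over the preimage of a point\<close>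

lemma ex_power_bracket:
  fixes q x :: real
  assumes q: "1 < q" and x: "1 \<le> x"
  shows "\<exists>j. q ^ j \<le> x \<and> x < q ^ Suc j"
proof -
  define k where "k = \<lfloor>log q x\<rfloor>"
  have "q powr k \<le> x" "x < q powr (k + 1)"
    using floor_log_eq_powr_iff[of x q k] q x by (simp_all add: k_def)
  moreover have "0 \<le> k"
    using q x by (simp add: k_def)
  ultimately have "q ^ nat k \<le> x \<and> x < q ^ Suc (nat k)"
    using q by (simp add: powr_realpow [symmetric] of_nat_nat add.commute powr_add)
  then show ?thesis ..
qed

definition cylinder :: "nat \<Rightarrow> nat \<Rightarrow> (nat \<Rightarrow> real) \<Rightarrow> real \<Rightarrow> (nat \<Rightarrow> real) set" where
  "cylinder n m y \<rho> = block_product {..<m} {m..<n} (cball_on {..<m} y \<rho>) (PiE {m..<n} (\<lambda>_. {-\<rho><..<\<rho>}))"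

lemma sets_cylinder:
  assumes "m \<le> n" shows "cylinder n m y \<rho> \<in> sets (lborel_on {..<n})"
  using sets_block_product[of "cball_on {..<m} y \<rho>" "{..<m}" "PiE {m..<n} (\<lambda>_. {-\<rho><..<\<rho>})" "{m..<n}"] assms
  by (simp add: cylinder_def ivl_disj_un_one sets_PiM_I_finite)

lemma emeasure_cylinder:
  assumes mn: "m \<le> n" and \<rho>: "0 < \<rho>"
  shows "emeasure (lborel_on {..<n}) (cylinder n m y \<rho>) = ennreal (unit_ball_vol m * 2 ^ (n - m) * \<rho> ^ n)"
proof -
  have "emeasure (lborel_on {..<n}) (cylinder n m y \<rho>)
      = ennreal (unit_ball_vol m * \<rho> ^ m) * ennreal ((\<rho> - - \<rho>) ^ (n - m))"
    using emeasure_block_product[of "{..<m}" "{m..<n}" "cball_on {..<m} y \<rho>" "PiE {m..<n} (\<lambda>_. {-\<rho><..<\<rho>})"]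
      mn \<rho> by (simp add: cylinder_def ivl_disj_un_one ivl_disj_int_one sets_PiM_I_finite
        emeasure_cball_on emeasure_lborel_on_box)
  also have "\<dots> = ennreal (unit_ball_vol m * \<rho> ^ m * (2 * \<rho>) ^ (n - m))"
    using \<rho> by (simp add: ennreal_mult)
  also have "unit_ball_vol m * \<rho> ^ m * (2 * \<rho>) ^ (n - m) = unit_ball_vol m * 2 ^ (n - m) * \<rho> ^ n"
    using mn by (simp add: power_mult_distrib mult_ac flip: power_add)
  finally show ?thesis .
qed

lemma Psi_inv_subset_cylinder:
  assumes mn: "m \<le> n" and x: "x \<in> Psi_inv n m b y" and \<rho>: "dG n m x < \<rho>"
  shows "x \<in> cylinder n m y \<rho>"
proof -
  have xE: "x \<in> Eset n m" and xy: "edist n x y < dG n m x" and D: "dG n m x = L2_set x {m..<n}"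
    using x Psi_inv_iff[OF mn] dG_eq_L2_set[OF mn] by (auto simp: Eset_iff)
  have "(\<Sum>i<m. (x i - y i)\<^sup>2) \<le> edist n x y ^ 2"
    using edist_pow2_split[OF mn, of x y] by simp
  also have "\<dots> \<le> \<rho>\<^sup>2"
    using xy \<rho> by (intro power_mono) (auto simp: edist_eq_L2_set)
  finally have "(\<Sum>i<m. (x i - y i)\<^sup>2) \<le> \<rho>\<^sup>2" .
  moreover have "-\<rho> < x i \<and> x i < \<rho>" if "i \<in> {m..<n}" for i
    using abs_le_L2_set[OF _ that, of x] \<rho> D by (simp add: abs_le_iff)
  ultimately show ?thesis
    using xE mn by (auto simp: cylinder_def block_product_def cball_on_def Eset_iff Rn_def
        PiE_iff ivl_disj_un_one)
qed

lemma Psi_integrand_le: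
  assumes \<beta>: "0 < \<beta>" and \<gamma>: "0 \<le> \<gamma> x" "dG n m x powr \<beta> * \<gamma> x \<le> K3"
    and L: "0 < L" "L * dG n m x ^ n \<le> measure (Leb n) (Psi n m b x)"
    and \<rho>: "0 < \<rho>" "\<rho> \<le> dG n m x"
  shows "\<gamma> x / measure (Leb n) (Psi n m b x) \<le> K3 * \<rho> powr (-\<beta>) / (L * \<rho> ^ n)"
proof -
  define D where "D = dG n m x"
  have D: "0 < D" "\<rho> \<le> D"
    using \<rho> by (simp_all add: D_def)
  have "\<gamma> x \<le> K3 * D powr (-\<beta>)"
    using \<gamma> D by (simp add: D_def powr_minus field_simps)
  also have "\<dots> \<le> K3 * \<rho> powr (-\<beta>)"
    using \<gamma> D \<rho> \<beta> by (intro mult_left_mono powr_mono2') (auto simp: D_def intro: order_trans[OF _ \<gamma>(2)])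
  finally have "\<gamma> x \<le> K3 * \<rho> powr (-\<beta>)" .
  moreover have "L * \<rho> ^ n \<le> measure (Leb n) (Psi n m b x)"
    using L D \<rho> by (intro order_trans[OF _ L(2)] mult_left_mono power_mono) (auto simp: D_def)
  moreover have "0 < L * \<rho> ^ n"
    using L \<rho> by simp
  ultimately show ?thesis
    using \<gamma> by (intro frac_le) auto
qed

lemma Psi_inv_shell_bound:
  assumes mn: "m < n" and b: "0 < b" and q: "1 < q" and \<beta>: "0 < \<beta>"
    and \<gamma>: "\<And>x. x \<in> Eset n m \<Longrightarrow> 0 \<le> \<gamma> x \<and> dG n m x powr \<beta> * \<gamma> x \<le> K3"
    and L: "0 < L" "\<And>x. x \<in> Eset n m \<Longrightarrow> L * dG n m x ^ n \<le> measure (Leb n) (Psi n m b x)"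
    and x: "x \<in> Psi_inv n m b y"
  defines "R \<equiv> dG n m y / b"
  shows "\<exists>j. \<gamma> x / measure (Leb n) (Psi n m b x) \<le> K3 * (q ^ j * R) powr (-\<beta>) / (L * (q ^ j * R) ^ n)
           \<and> x \<in> cylinder n m y (q ^ Suc j * R)"
proof -
  have xE: "x \<in> Eset n m" and yE: "y \<in> Eset n m" and Rx: "R < dG n m x"
    using x Psi_inv_iff[of m n x b y] mn b by (auto simp: R_def field_simps)
  have R: "0 < R"
    using yE b dG_eq_L2_set[of m n y] mn by (simp add: R_def Eset_iff)
  obtain j where j: "q ^ j \<le> dG n m x / R" "dG n m x / R < q ^ Suc j"
    using ex_power_bracket[OF q, of "dG n m x / R"] R Rx by auto
  have "\<gamma> x / measure (Leb n) (Psi n m b x) \<le> K3 * (q ^ j * R) powr (-\<beta>) / (L * (q ^ j * R) ^ n)"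
    using \<beta> \<gamma>[OF xE] L(1) L(2)[OF xE] R q j by (intro Psi_integrand_le) (auto simp: pos_le_divide_eq)
  moreover have "x \<in> cylinder n m y (q ^ Suc j * R)"
    using x mn R j by (intro Psi_inv_subset_cylinder) (auto simp: pos_divide_less_eq)
  ultimately show ?thesis
    by blast
qed

lemma nn_integral_le_suminf_cover:
  fixes f c :: "_ \<Rightarrow> ennreal"
  assumes T: "\<And>j. T j \<in> sets M" and cover: "\<And>x. x \<in> S \<Longrightarrow> \<exists>j. f x \<le> c j \<and> x \<in> T j"
  shows "(\<integral>\<^sup>+ x \<in> S. f x \<partial>M) \<le> (\<Sum>j. c j * emeasure M (T j))"
proof -
  have "f x * indicator S x \<le> (\<Sum>j. c j * indicator (T j) x)" for x
  proof (cases "x \<in> S")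
    case True
    then obtain j where "f x \<le> c j" "x \<in> T j"
      using cover by blast
    then have "f x * indicator S x \<le> c j * indicator (T j) x"
      using True by simp
    also have "g j \<le> suminf g" for g :: "nat \<Rightarrow> ennreal"
      using sum_le_suminf[OF summableI, of "{j}" g] by simp
    finally show ?thesis .
  qed simp
  then have "(\<integral>\<^sup>+ x \<in> S. f x \<partial>M) \<le> (\<integral>\<^sup>+ x. (\<Sum>j. c j * indicator (T j) x) \<partial>M)"
    by (intro nn_integral_mono) simp
  also have "\<dots> = (\<Sum>j. c j * emeasure M (T j))"
    using T by (simp add: nn_integral_suminf nn_integral_cmult_indicator)
  finally show ?thesis .
qed

lemma geometric_shell_term_eq:
  fixes q R L V K3 \<beta> :: real
  assumes "0 < q" "0 < R" "0 < L"
  shows "K3 * (q ^ j * R) powr (-\<beta>) / (L * (q ^ j * R) ^ n) * (V * (q ^ Suc j * R) ^ n)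
    = K3 * V * q ^ n / L * R powr (-\<beta>) * (q powr (-\<beta>)) ^ j"
proof -
  have "(q ^ j * R) powr (-\<beta>) = R powr (-\<beta>) * (q powr (-\<beta>)) ^ j"
    using assms by (simp add: powr_mult powr_realpow [symmetric] powr_powr powr_power mult.commute)
  then show ?thesis
    using assms by (simp add: power_mult_distrib field_simps)
qed

lemma nn_integral_Psi_inv_le:
  assumes mn: "m < n" and b: "0 < b" and q: "1 < q" and \<beta>: "0 < \<beta>"
    and \<gamma>: "\<And>x. x \<in> Eset n m \<Longrightarrow> 0 \<le> \<gamma> x \<and> dG n m x powr \<beta> * \<gamma> x \<le> K3"
    and L: "0 < L" "\<And>x. x \<in> Eset n m \<Longrightarrow> L * dG n m x ^ n \<le> measure (Leb n) (Psi n m b x)"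
    and y: "y \<in> Eset n m"
  shows "(\<integral>\<^sup>+ x \<in> Psi_inv n m b y. ennreal (\<gamma> x / measure (Leb n) (Psi n m b x)) \<partial>Leb n)
    \<le> ennreal (K3 * unit_ball_vol m * 2 ^ (n - m) * q ^ n / L * (dG n m y / b) powr (-\<beta>)
                / (1 - q powr (-\<beta>)))"
proof -
  define R where "R = dG n m y / b"
  define t where "t = q powr (-\<beta>)"
  define A where "A = K3 * (unit_ball_vol m * 2 ^ (n - m)) * q ^ n / L * R powr (-\<beta>)"
  define c where "c j = K3 * (q ^ j * R) powr (-\<beta>) / (L * (q ^ j * R) ^ n)" for j
  define T where "T j = cylinder n m y (q ^ Suc j * R)" for j
  have R: "0 < R"
    using y b dG_eq_L2_set[of m n y] mn by (simp add: R_def Eset_iff)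
  have t: "0 \<le> t" "t < 1"
    using q \<beta> powr_less_mono[of "-\<beta>" 0 q] by (simp_all add: t_def)
  have K3: "0 \<le> K3"
    using \<gamma>[OF y] by (smt (verit) mult_nonneg_nonneg powr_ge_zero)
  then have "0 \<le> A"
    using L R q by (simp add: A_def)
  have "(\<integral>\<^sup>+ x \<in> Psi_inv n m b y. ennreal (\<gamma> x / measure (Leb n) (Psi n m b x)) \<partial>lborel_on {..<n})
      \<le> (\<Sum>j. ennreal (c j) * emeasure (lborel_on {..<n}) (T j))"
  proof (rule nn_integral_le_suminf_cover)
    show "T j \<in> sets (lborel_on {..<n})" for j
      using mn by (simp add: T_def sets_cylinder)
    show "\<exists>j. ennreal (\<gamma> x / measure (Leb n) (Psi n m b x)) \<le> ennreal (c j) \<and> x \<in> T j"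
      if "x \<in> Psi_inv n m b y" for x
      using Psi_inv_shell_bound[OF mn b q \<beta> \<gamma> L that] unfolding c_def T_def R_def
      by (blast intro: ennreal_leI)
  qed
  also have "\<dots> = (\<Sum>j. ennreal (A * t ^ j))"
    using mn q R K3 L(1) geometric_shell_term_eq[OF _ R L(1), where V = "unit_ball_vol m * 2 ^ (n - m)"]
    by (intro suminf_cong) (simp add: T_def emeasure_cylinder c_def A_def t_def flip: ennreal_mult)
  also have "\<dots> = ennreal (A / (1 - t))"
    using t \<open>0 \<le> A\<close> by (simp add: suminf_ennreal2 summable_geometric suminf_geometric suminf_mult)
  finally show ?thesis
    by (simp add: Leb_def nn_integral_completion A_def R_def t_def mult.assoc)
qed

section \<open>Arithmetic of the constant\<close>

lemma Psi_volume_ratio: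
  fixes b q \<omega> :: real and m k :: nat
  assumes b: "0 < b" and k: "0 < k" and \<omega>: "0 < \<omega>"
  shows "\<omega> * 2 ^ k * q ^ (m + k) / (\<omega> * (sqrt (3 * b) / 4) ^ m * (b / (2 * sqrt k)) ^ k)
    = (4 * q / sqrt 3) ^ m * (4 * q * sqrt k) ^ k / (b powr (m / 2) * b ^ k)"
proof -
  have "sqrt (3 * b) / 4 * (4 * q / sqrt 3) = q * sqrt b"
    by (simp add: real_sqrt_mult)
  then have m: "(sqrt (3 * b) / 4) ^ m * (4 * q / sqrt 3) ^ m = q ^ m * sqrt b ^ m"
    by (metis power_mult_distrib)
  have "b / (2 * sqrt k) * (4 * q * sqrt k) = 2 * q * b"
    using k by (simp add: field_simps)
  then have k': "(b / (2 * sqrt k)) ^ k * (4 * q * sqrt k) ^ k = 2 ^ k * q ^ k * b ^ k"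
    by (metis power_mult_distrib)
  have sb: "sqrt b ^ m = b powr (m / 2)"
    using b by (simp add: powr_half_sqrt [symmetric] powr_power)
  have "(\<omega> * (sqrt (3 * b) / 4) ^ m * (b / (2 * sqrt k)) ^ k) * ((4 * q / sqrt 3) ^ m * (4 * q * sqrt k) ^ k)
      = \<omega> * ((sqrt (3 * b) / 4) ^ m * (4 * q / sqrt 3) ^ m) * ((b / (2 * sqrt k)) ^ k * (4 * q * sqrt k) ^ k)"
    by (simp only: mult_ac)
  also have "\<dots> = \<omega> * 2 ^ k * q ^ (m + k) * (b powr (m / 2) * b ^ k)"
    unfolding m k' sb by (simp add: power_add mult_ac)
  finally have "\<omega> * 2 ^ k * q ^ (m + k) * (b powr (m / 2) * b ^ k)
      = (\<omega> * (sqrt (3 * b) / 4) ^ m * (b / (2 * sqrt k)) ^ k) * ((4 * q / sqrt 3) ^ m * (4 * q * sqrt k) ^ k)" ..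
  moreover have "\<omega> * (sqrt (3 * b) / 4) ^ m * (b / (2 * sqrt k)) ^ k \<noteq> 0" "b powr (m / 2) * b ^ k \<noteq> 0"
    using b k \<omega> by auto
  ultimately show ?thesis
    by (simp add: frac_eq_eq mult_ac)
qed

lemma sixfifths_power_le: "(4 * (6/5) / sqrt 3) ^ m \<le> (2::real) powr (3 * real m / 2)"
proof -
  have "(4 * (6/5) / sqrt 3 :: real)\<^sup>2 \<le> 8"
    by (simp add: power_divide)
  then have "4 * (6/5) / sqrt 3 \<le> sqrt (8::real)"
    by (rule real_le_rsqrt)
  then have "(4 * (6/5) / sqrt 3) ^ m \<le> sqrt (8::real) ^ m"
    by (rule power_mono) simp
  also have "sqrt (8::real) = 2 powr (3 / 2)"
    using powr_half_sqrt_powr[of 2 3] powr_realpow[of 2 3] by simp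
  also have "(2 powr (3 / 2)) ^ m = (2::real) powr (3 * real m / 2)"
    by (simp add: powr_power mult.commute)
  finally show ?thesis .
qed

lemma Psi_inv_constant_eq:
  fixes b \<beta> K3 \<delta> \<omega> q t :: real and m n :: nat
  assumes b: "0 < b" and mn: "m < n" and \<omega>: "0 < \<omega>" and \<delta>: "0 < \<delta>"
  shows "K3 * \<omega> * 2 ^ (n - m) * q ^ n / (\<omega> * (sqrt (3 * b) / 4) ^ m * (b / (2 * sqrt (n - m))) ^ (n - m))
      * (\<delta> / b) powr (-\<beta>) / (1 - t)
    = K3 * (4 * q * sqrt (n - m)) ^ (n - m) * b powr (\<beta> + real m / 2 - real n)
      * (\<delta> powr (-\<beta>) * (4 * q / sqrt 3) ^ m * (1 / (1 - t)))"
proof -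
  define k where "k = n - m"
  have k: "0 < k" "n = m + k"
    using mn by (simp_all add: k_def)
  have "(\<delta> / b) powr (-\<beta>) = \<delta> powr (-\<beta>) * b powr \<beta>"
    using b \<delta> by (simp add: powr_divide powr_minus_divide)
  moreover have "b powr (m / 2) * b ^ k = b powr (m / 2 + k)"
    using b by (simp add: powr_add powr_realpow)
  ultimately have "(\<delta> / b) powr (-\<beta>) / (b powr (m / 2) * b ^ k) = \<delta> powr (-\<beta>) * (b powr \<beta> / b powr (m / 2 + k))"
    by simp
  also have "b powr \<beta> / b powr (m / 2 + k) = b powr (\<beta> + real m / 2 - real n)"
    using k by (simp add: powr_diff [symmetric] algebra_simps)
  finally have powers: "(\<delta> / b) powr (-\<beta>) / (b powr (m / 2) * b ^ k) = \<delta> powr (-\<beta>) * b powr (\<beta> + real m / 2 - real n)" .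
  have "K3 * \<omega> * 2 ^ k * q ^ n / (\<omega> * (sqrt (3 * b) / 4) ^ m * (b / (2 * sqrt k)) ^ k)
      * (\<delta> / b) powr (-\<beta>) / (1 - t)
      = K3 * (\<omega> * 2 ^ k * q ^ (m + k) / (\<omega> * (sqrt (3 * b) / 4) ^ m * (b / (2 * sqrt k)) ^ k))
      * (\<delta> / b) powr (-\<beta>) / (1 - t)"
    by (simp only: k(2) times_divide_eq_right mult.assoc)
  also have "\<dots> = K3 * (4 * q * sqrt k) ^ k * (4 * q / sqrt 3) ^ m
      * ((\<delta> / b) powr (-\<beta>) / (b powr (m / 2) * b ^ k)) / (1 - t)"
    unfolding Psi_volume_ratio[OF b k(1) \<omega>]
    by (simp only: times_divide_eq_right times_divide_eq_left mult_ac)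
  also have "\<dots> = K3 * (4 * q * sqrt k) ^ k * b powr (\<beta> + real m / 2 - real n)
      * (\<delta> powr (-\<beta>) * (4 * q / sqrt 3) ^ m * (1 / (1 - t)))"
    unfolding powers by (simp add: mult_ac)
  finally show ?thesis
    unfolding k_def [symmetric] .
qed

lemma Psi_inv_constant_le:
  fixes b \<beta> K3 \<delta> g \<omega> :: real and m n :: nat
  assumes b: "0 < b" "b < 1" and mn: "m < n" and \<beta>: "1 \<le> \<beta>" and \<omega>: "0 < \<omega>"
    and K3: "0 \<le> K3" and \<delta>: "0 < \<delta>" "\<delta> powr (-\<beta>) \<le> g"
  shows "K3 * \<omega> * 2 ^ (n - m) * (6/5) ^ n / (\<omega> * (sqrt (3 * b) / 4) ^ m * (b / (2 * sqrt (n - m))) ^ (n - m))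
      * (\<delta> / b) powr (-\<beta>) / (1 - (6/5) powr (-\<beta>))
    \<le> real n * 2 powr (3 * real m / 2) * K3 * (6 * (4 * (6/5) * sqrt (real (n - m))) ^ (n - m))
      * b powr (\<beta> + real m / 2 - real n) / (1 - b) ^ (n - m - 1) * g"
proof -
  define C where "C = K3 * (4 * (6/5) * sqrt (n - m)) ^ (n - m) * b powr (\<beta> + real m / 2 - real n)"
  define t :: real where "t = (6/5) powr (-\<beta>)"
  have C: "0 \<le> C"
    using K3 by (simp add: C_def)
  have "C * (\<delta> powr (-\<beta>) * (4 * (6/5) / sqrt 3) ^ m * (1 / (1 - t)))
      \<le> C * (g * 2 powr (3 * real m / 2) * 6)"
  proof -
    have "t \<le> (6/5) powr (-1)"
      unfolding t_def using \<beta> by (intro powr_mono) auto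
    then have "1 / (1 - t) \<le> 6" "0 \<le> 1 / (1 - t)"
      by (simp_all add: powr_minus field_simps)
    moreover have "0 \<le> g"
      using \<delta> by (simp add: order_trans[OF _ \<delta>(2)])
    ultimately show ?thesis
      using \<delta>(2) C sixfifths_power_le[of m] by (intro mult_left_mono mult_mono) auto
  qed
  also have "\<dots> \<le> real n / (1 - b) ^ (n - m - 1) * (C * (g * 2 powr (3 * real m / 2) * 6))"
  proof -
    have "(1 - b) ^ (n - m - 1) \<le> 1" "0 < (1 - b) ^ (n - m - 1)"
      using b by (simp_all add: power_le_one)
    then have "1 \<le> real n / (1 - b) ^ (n - m - 1)"
      using mn by (simp add: le_divide_eq)
    moreover have "0 \<le> C * (g * 2 powr (3 * real m / 2) * 6)"
      using C \<delta> by (simp add: order_trans[OF _ \<delta>(2)])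
    ultimately show ?thesis
      using mult_right_mono by fastforce
  qed
  finally show ?thesis
    unfolding Psi_inv_constant_eq[OF b(1) mn \<omega> \<delta>(1)] t_def[symmetric] C_def
    by (simp add: mult_ac times_divide_eq_left times_divide_eq_right)
qed

theorem mainTheorem8:
  shows "\<exists>K4' :: nat \<Rightarrow> real. \<forall>(n::nat) (m::nat) (b::real) (\<beta>::real) (\<gamma>::(nat \<Rightarrow> real) \<Rightarrow> real) (K3::real).
    0 < b \<and> b < 1 \<and> m < n \<and> \<beta> > real n - real m / 2 \<and>
    \<gamma> \<in> borel_measurable (restrict_space (Leb n) (Eset n m)) \<and>
    (\<forall>x\<in>Eset n m. 0 \<le> \<gamma> x \<and> 1 \<le> dG n m x powr \<beta> * \<gamma> x \<and> dG n m x powr \<beta> * \<gamma> x \<le> K3)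
    \<longrightarrow> (\<forall>y\<in>Eset n m.
          (\<integral>\<^sup>+ x \<in> Psi_inv n m b y. ennreal (\<gamma> x / measure (Leb n) (Psi n m b x)) \<partial>Leb n)
          \<le> ennreal (real n * 2 powr (3 * real m / 2) * K3 * K4' (n - m)
                     * b powr (\<beta> + real m / 2 - real n) / (1 - b) ^ (n - m - 1) * \<gamma> y))"
proof (intro exI[of _ "\<lambda>k. 6 * (4 * (6/5) * sqrt (real k)) ^ k"] allI impI ballI, goal_cases)
  case (1 n m b \<beta> \<gamma> K3 y)
  then have b: "0 < b" "b < 1" and mn: "m < n" and \<beta>: "1 \<le> \<beta>" and y: "y \<in> Eset n m"
    and \<gamma>: "\<And>x. x \<in> Eset n m \<Longrightarrow> 0 \<le> \<gamma> x \<and> dG n m x powr \<beta> * \<gamma> x \<le> K3"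
    and \<gamma>y: "1 \<le> dG n m y powr \<beta> * \<gamma> y" "dG n m y powr \<beta> * \<gamma> y \<le> K3"
    by auto
  define L where "L = unit_ball_vol m * (sqrt (3 * b) / 4) ^ m * (b / (2 * sqrt (n - m))) ^ (n - m)"
  have L: "0 < L" "\<And>x. x \<in> Eset n m \<Longrightarrow> L * dG n m x ^ n \<le> measure (Leb n) (Psi n m b x)"
    using b mn measure_Psi_ge[OF mn b] by (simp_all add: L_def)
  have \<delta>: "0 < dG n m y" "dG n m y powr (-\<beta>) \<le> \<gamma> y"
    using y \<gamma>y(1) mn dG_eq_L2_set[of m n y] by (auto simp: Eset_iff powr_minus field_simps)
  have "(\<integral>\<^sup>+ x \<in> Psi_inv n m b y. ennreal (\<gamma> x / measure (Leb n) (Psi n m b x)) \<partial>Leb n)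
      \<le> ennreal (K3 * unit_ball_vol m * 2 ^ (n - m) * (6/5) ^ n / L * (dG n m y / b) powr (-\<beta>)
                  / (1 - (6/5) powr (-\<beta>)))"
    using \<beta> by (intro nn_integral_Psi_inv_le[OF mn b(1) _ _ \<gamma> L y]) auto
  also have "\<dots> \<le> ennreal (real n * 2 powr (3 * real m / 2) * K3 * (6 * (4 * (6/5) * sqrt (real (n - m))) ^ (n - m))
      * b powr (\<beta> + real m / 2 - real n) / (1 - b) ^ (n - m - 1) * \<gamma> y)"
    using \<gamma>y \<delta> unfolding L_def by (intro ennreal_leI Psi_inv_constant_le[OF b mn \<beta>]) auto
  finally show ?case .
qed

end
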